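(* For every finite graph $\mathbb{G}$, the height 1 condition $\Sigma_{\mathbb{G}}$ is trivial if and only if $\mathbb{G}$ is 3-colorable (i.e., admits a homomorphism to $\mathbb{K}_3$).
   Context: A graph is a structure $(V,E)$ with a single symmetric binary relation $E$ (loops allowed); $\mathbb{K}_3$ is the complete loopless graph on three vertices. A clone on a set $A$ is a set of finitary operations on $A$ containing all projections and closed under composition; $\mathcal{P}$ is the clone of projections on $\{0,1\}$. A height 1 condition is a finite set of identities $f(x_{\pi(1)},\dots,x_{\pi(n)})\approx g(x_{\rho(1)},\dots,x_{\rho(m)})$ (function symbols $f,g$, arbitrary maps $\pi,\rho$, universally quantified); a clone satisfies it if its symbols can be assigned functions of the clone of the right arities making all identities true; the condition is trivial if it is satisfied in every clone (equivalently, in $\mathcal{P}$). For a finite graph $\mathbb{G}=(V,E)$, $\Sigma_{\mathbb{G}}$ is the height 1 condition with a ternary symbol $f_v$ for each $v\in V$, a $6$-ary symbol $g_{(u,v)}$ for each $(u,v)\in E$, and, for each $(u,v)\in E$, the identities $f_u(x,y,z)\approx g_{(u,v)}(x,y,x,z,y,z)$ and $f_v(x,y,z)\approx g_{(u,v)}(y,x,z,x,z,y)$. *)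

theory Defs
  imports Main
begin

definition fin_graph :: "'v set \<Rightarrow> ('v \<times> 'v) set \<Rightarrow> bool" where
  "fin_graph V E \<longleftrightarrow> finite V \<and> E \<subseteq> V \<times> V \<and> sym E"

definition graph_hom :: "'v set \<Rightarrow> ('v \<times> 'v) set \<Rightarrow> 'w set \<Rightarrow> ('w \<times> 'w) set \<Rightarrow> ('v \<Rightarrow> 'w) \<Rightarrow> bool" where
  "graph_hom V E W F h \<longleftrightarrow> (\<forall>v\<in>V. h v \<in> W) \<and> (\<forall>(u,v)\<in>E. (h u, h v) \<in> F)"

definition K3_V :: "nat set" where "K3_V = {0,1,2}"
definition K3_E :: "(nat \<times> nat) set" where "K3_E = {(a,b). a \<in> K3_V \<and> b \<in> K3_V \<and> a \<noteq> b}"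

definition three_colorable :: "'v set \<Rightarrow> ('v \<times> 'v) set \<Rightarrow> bool" where
  "three_colorable V E \<longleftrightarrow> (\<exists>h. graph_hom V E K3_V K3_E h)"

text \<open>Finitary operations on a set A are represented as pairs (arity n, function on argument lists
  of length n).\<close>
type_synonym 'a operation = "nat \<times> ('a list \<Rightarrow> 'a)"

definition projection_clone :: "'a set \<Rightarrow> 'a operation set" where
  "projection_clone A = {(n, \<lambda>xs. xs ! i) | n i. i < n}"

definition clone_P :: "bool operation set" where
  "clone_P = projection_clone (UNIV :: bool set)"

definition satisfies_Sigma ::
    "'a set \<Rightarrow> 'a operation set \<Rightarrow> 'v set \<Rightarrow> ('v \<times> 'v) set \<Rightarrow> bool" where
  "satisfies_Sigma A C V E \<longleftrightarrow>
     (\<exists>(f :: 'v \<Rightarrow> 'a list \<Rightarrow> 'a) (g :: 'v \<times> 'v \<Rightarrow> 'a list \<Rightarrow> 'a).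
        (\<forall>v\<in>V. (3, f v) \<in> C) \<and> (\<forall>e\<in>E. (6, g e) \<in> C) \<and>
        (\<forall>(u,v)\<in>E. \<forall>x\<in>A. \<forall>y\<in>A. \<forall>z\<in>A.
            f u [x,y,z] = g (u,v) [x,y,x,z,y,z] \<and>
            f v [x,y,z] = g (u,v) [y,x,z,x,z,y]))"

definition Sigma_trivial :: "'v set \<Rightarrow> ('v \<times> 'v) set \<Rightarrow> bool" where
  "Sigma_trivial V E \<longleftrightarrow> satisfies_Sigma (UNIV :: bool set) clone_P V E"

end

theory Submission
  imports Defs
begin

text \<open>In the clone of projections every f_v is the projection to some coordinate c v < 3 and
  every g_(u,v) the projection to some coordinate j < 6.  The two identities of the edge (u,v) then
  say that c u and c v are the variables at position j of the minors (x,y,x,z,y,z) and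
  (y,x,z,x,z,y), respectively.  Over the six positions these pairs, listed by sigma_left and
  sigma_right, are exactly the six arcs of K3, so the satisfying choices of coordinates are
  precisely the 3-colourings of the graph.\<close>

definition sigma_left :: "nat list" where
  "sigma_left = [0,1,0,2,1,2]"

definition sigma_right :: "nat list" where
  "sigma_right = [1,0,2,0,2,1]"

lemma sigma_minors_nth:
  assumes "j < 6"
  shows "[x,y,x,z,y,z] ! j = [x,y,z] ! (sigma_left ! j)"
    and "[y,x,z,x,z,y] ! j = [x,y,z] ! (sigma_right ! j)"
    and "sigma_left ! j < 3" "sigma_right ! j < 3"
proof -
  have "j \<in> {0,1,2,3,4,5}" using assms by auto
  then show "[x,y,x,z,y,z] ! j = [x,y,z] ! (sigma_left ! j)"
    and "[y,x,z,x,z,y] ! j = [x,y,z] ! (sigma_right ! j)"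
    and "sigma_left ! j < 3" "sigma_right ! j < 3"
    by (auto simp: sigma_left_def sigma_right_def)
qed

lemma K3_E_eq_zip_sigma: "K3_E = set (zip sigma_left sigma_right)"
  unfolding K3_E_def K3_V_def sigma_left_def sigma_right_def by auto

lemma bool_triple_nth_eq_iff:
  assumes "i < 3" "k < 3"
  shows "(\<forall>x y z::bool. [x,y,z] ! i = [x,y,z] ! k) \<longleftrightarrow> i = k"
proof
  assume eq: "\<forall>x y z::bool. [x,y,z] ! i = [x,y,z] ! k"
  have "[True,False,False] ! i = [True,False,False] ! k"
       "[False,True,False] ! i = [False,True,False] ! k"
    using eq by blast+
  moreover have "i \<in> {0,1,2}" "k \<in> {0,1,2}" using assms by auto
  ultimately show "i = k" by auto
qed simp

definition proj_edge_identities :: "nat \<Rightarrow> nat \<Rightarrow> nat \<Rightarrow> bool" where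
  "proj_edge_identities a b j \<longleftrightarrow>
     (\<forall>x y z::bool. [x,y,z] ! a = [x,y,x,z,y,z] ! j \<and> [x,y,z] ! b = [y,x,z,x,z,y] ! j)"

lemma proj_edge_identities_iff_K3_E:
  assumes "a < 3" "b < 3"
  shows "(\<exists>j<6. proj_edge_identities a b j) \<longleftrightarrow> (a, b) \<in> K3_E"
proof -
  have "proj_edge_identities a b j \<longleftrightarrow> a = sigma_left ! j \<and> b = sigma_right ! j"
    if "j < 6" for j
    using bool_triple_nth_eq_iff[OF assms(1) sigma_minors_nth(3)[OF that]]
          bool_triple_nth_eq_iff[OF assms(2) sigma_minors_nth(4)[OF that]]
    by (simp add: proj_edge_identities_def sigma_minors_nth(1,2)[OF that] all_conj_distrib)
  moreover have "length sigma_left = 6" "length sigma_right = 6"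
    by (simp_all add: sigma_left_def sigma_right_def)
  ultimately show ?thesis
    unfolding K3_E_eq_zip_sigma in_set_zip by auto
qed

lemma clone_P_iff: "(n, f) \<in> clone_P \<longleftrightarrow> (\<exists>i<n. f = (\<lambda>xs. xs ! i))"
  by (auto simp: clone_P_def projection_clone_def)

lemma three_colorable_iff_K3_E:
  "three_colorable V E \<longleftrightarrow> (\<exists>c. (\<forall>v\<in>V. c v < 3) \<and> (\<forall>(u,v)\<in>E. (c u, c v) \<in> K3_E))"
proof -
  have "c \<in> K3_V \<longleftrightarrow> c < 3" for c :: nat
    by (auto simp: K3_V_def)
  then show ?thesis
    by (simp add: three_colorable_def graph_hom_def)
qed

lemma Sigma_trivial_imp_three_colorable:
  assumes "E \<subseteq> V \<times> V" and "Sigma_trivial V E"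
  shows "three_colorable V E"
proof -
  obtain f g where
    f: "\<forall>v\<in>V. \<exists>i<3. f v = (\<lambda>xs. xs ! i)" and
    g: "\<forall>e\<in>E. \<exists>j<6. g e = (\<lambda>xs. xs ! j)" and
    identities: "\<forall>(u,v)\<in>E. \<forall>x y z::bool.
       f u [x,y,z] = g (u,v) [x,y,x,z,y,z] \<and> f v [x,y,z] = g (u,v) [y,x,z,x,z,y]"
    using assms(2) by (auto simp: Sigma_trivial_def satisfies_Sigma_def clone_P_iff)
  obtain c where c: "\<forall>v\<in>V. c v < 3 \<and> f v = (\<lambda>xs. xs ! c v)"
    using f by metis
  have "(c u, c v) \<in> K3_E" if uv: "(u, v) \<in> E" for u v
  proof -
    have "u \<in> V" "v \<in> V" using uv assms(1) by auto
    moreover obtain j where "j < 6" "g (u,v) = (\<lambda>xs. xs ! j)" using g uv by blast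
    ultimately have "proj_edge_identities (c u) (c v) j"
      using identities uv c by (fastforce simp: proj_edge_identities_def)
    with \<open>j < 6\<close> \<open>u \<in> V\<close> \<open>v \<in> V\<close> c show ?thesis
      using proj_edge_identities_iff_K3_E by blast
  qed
  then have "\<forall>(u,v)\<in>E. (c u, c v) \<in> K3_E" by blast
  moreover have "\<forall>v\<in>V. c v < 3" using c by blast
  ultimately show ?thesis
    unfolding three_colorable_iff_K3_E by blast
qed

lemma three_colorable_imp_Sigma_trivial:
  assumes "three_colorable V E"
  shows "Sigma_trivial V E"
proof -
  obtain c where c: "\<forall>v\<in>V. c v < 3" and arcs: "\<forall>(u,v)\<in>E. (c u, c v) \<in> K3_E"
    using assms unfolding three_colorable_iff_K3_E by blast
  have "\<exists>j<6. proj_edge_identities (c (fst e)) (c (snd e)) j" if "e \<in> E" for e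
  proof -
    have "(c (fst e), c (snd e)) \<in> K3_E" using arcs that by auto
    moreover from this have "c (fst e) < 3" "c (snd e) < 3" by (auto simp: K3_E_def K3_V_def)
    ultimately show ?thesis using proj_edge_identities_iff_K3_E by blast
  qed
  then obtain d where
    d: "\<forall>e\<in>E. d e < 6 \<and> proj_edge_identities (c (fst e)) (c (snd e)) (d e)"
    by metis
  show ?thesis
    unfolding Sigma_trivial_def satisfies_Sigma_def
  proof (intro exI conjI)
    show "\<forall>v\<in>V. (3, \<lambda>xs. xs ! c v) \<in> clone_P"
      using c by (auto simp: clone_P_iff)
    show "\<forall>e\<in>E. (6, \<lambda>xs. xs ! d e) \<in> clone_P"
      using d by (auto simp: clone_P_iff)
    show "\<forall>(u,v)\<in>E. \<forall>x\<in>UNIV. \<forall>y\<in>UNIV. \<forall>z::bool\<in>UNIV.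
        [x,y,z] ! c u = [x,y,x,z,y,z] ! d (u,v) \<and> [x,y,z] ! c v = [y,x,z,x,z,y] ! d (u,v)"
    proof clarify
      fix u v and x y z :: bool assume "(u, v) \<in> E"
      then have "proj_edge_identities (c u) (c v) (d (u,v))" using d by fastforce
      then show "[x,y,z] ! c u = [x,y,x,z,y,z] ! d (u,v) \<and> [x,y,z] ! c v = [y,x,z,x,z,y] ! d (u,v)"
        unfolding proj_edge_identities_def by blast
    qed
  qed
qed

theorem lemma3p3:
  fixes V :: "'v set" and E :: "('v \<times> 'v) set"
  assumes "fin_graph V E"
  shows "Sigma_trivial V E \<longleftrightarrow> three_colorable V E"
proof -
  have "E \<subseteq> V \<times> V" using assms by (simp add: fin_graph_def)
  then show ?thesis
    using Sigma_trivial_imp_three_colorable three_colorable_imp_Sigma_trivial by blast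
qed

end
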